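(* For every cardinal $\lambda\geqslant 2$ there is no Hausdorff $d$-feebly compact topological semigroup which contains the $\lambda$-polycyclic monoid $P_\lambda$ as a dense subsemigroup.
   Context: For a non-zero cardinal $\lambda$, the polycyclic monoid $P_\lambda$ is the monoid with zero given by the presentation $\langle \{p_i\}_{i\in\lambda},\{p_i^{-1}\}_{i\in\lambda}\mid p_ip_i^{-1}=1,\ p_ip_j^{-1}=0 \text{ for } i\neq j\rangle$. A topological semigroup is a topological space with a jointly continuous associative operation. A space is $d$-feebly compact if every discrete family of its open subsets is finite. *)

theory Defs
  imports "HOL-Analysis.Analysis"
begin

(* The lambda-polycyclic monoid P_lambda, lambda = cardinality of the type 'i.
   Standard concrete model (Lawson): nonzero elements are pairs of words (u,v),
   None is the zero; generators p_i = Some ([],[i]), p_i^{-1} = Some ([i],[]),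
   identity Some ([],[]). *)
type_synonym 'i polycyclic = "('i list \<times> 'i list) option"

definition pc_mult :: "'i polycyclic \<Rightarrow> 'i polycyclic \<Rightarrow> 'i polycyclic" where
  "pc_mult a b = (case a of None \<Rightarrow> None | Some (u, v) \<Rightarrow>
     (case b of None \<Rightarrow> None | Some (x, y) \<Rightarrow>
       (if (\<exists>w. x = v @ w) then Some (u @ drop (length v) x, y)
        else if (\<exists>w. v = x @ w) then Some (u, y @ drop (length x) v)
        else None)))"

definition pc_one :: "'i polycyclic" where "pc_one = Some ([], [])"
definition pc_gen :: "'i \<Rightarrow> 'i polycyclic" where "pc_gen i = Some ([], [i])"
definition pc_geninv :: "'i \<Rightarrow> 'i polycyclic" where "pc_geninv i = Some ([i], [])"

lemma pc_rel1: "pc_mult (pc_gen i) (pc_geninv i) = pc_one"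
  by (simp add: pc_mult_def pc_gen_def pc_geninv_def pc_one_def)

lemma pc_rel2: "i \<noteq> j \<Longrightarrow> pc_mult (pc_gen i) (pc_geninv j) = None"
  by (simp add: pc_mult_def pc_gen_def pc_geninv_def)

definition topological_semigroup :: "'s topology \<Rightarrow> ('s \<Rightarrow> 's \<Rightarrow> 's) \<Rightarrow> bool" where
  "topological_semigroup X m \<longleftrightarrow>
     (\<forall>x\<in>topspace X. \<forall>y\<in>topspace X. m x y \<in> topspace X) \<and>
     (\<forall>x\<in>topspace X. \<forall>y\<in>topspace X. \<forall>z\<in>topspace X. m (m x y) z = m x (m y z)) \<and>
     continuous_map (prod_topology X X) X (\<lambda>p. m (fst p) (snd p))"

definition discrete_family :: "'s topology \<Rightarrow> 's set set \<Rightarrow> bool" where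
  "discrete_family X \<U> \<longleftrightarrow>
     (\<forall>x\<in>topspace X. \<exists>V. openin X V \<and> x \<in> V \<and>
        (\<forall>U1\<in>\<U>. \<forall>U2\<in>\<U>. U1 \<inter> V \<noteq> {} \<and> U2 \<inter> V \<noteq> {} \<longrightarrow> U1 = U2))"

definition d_feebly_compact :: "'s topology \<Rightarrow> bool" where
  "d_feebly_compact X \<longleftrightarrow>
     (\<forall>\<U>. (\<forall>U\<in>\<U>. openin X U) \<and> discrete_family X \<U> \<longrightarrow> finite \<U>)"

end

theory Submission
  imports Defs "HOL-Library.Sublist"
begin

text \<open>
  Suppose \<open>P\<^sub>\<lambda>\<close> sits densely in a Hausdorff topological semigroup \<open>X\<close>. By density and
  continuity the zero of \<open>P\<^sub>\<lambda>\<close> is a zero of \<open>X\<close>, and every nonzero element of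
  \<open>P\<^sub>\<lambda>\<close> is an isolated point of \<open>X\<close>. If \<open>X\<close> is moreover \<open>d\<close>-feebly compact, every
  infinite set of isolated points accumulates somewhere. With two letters \<open>i \<noteq> j\<close> and the
  prefix code \<open>w\<^sub>n = i\<^sup>n j\<close>, the idempotents \<open>e\<^sub>n = (w\<^sub>n, w\<^sub>n)\<close> are pairwise orthogonal,
  so any accumulation point \<open>s\<close> of them satisfies \<open>s = s s = 0\<close>; hence \<open>e\<^sub>n \<rightarrow> 0\<close>.
  Since \<open>a\<^sub>n = ([j], w\<^sub>n)\<close> satisfies \<open>a\<^sub>n = a\<^sub>n e\<^sub>n\<close>, an accumulation point \<open>s\<close> of the \<open>a\<^sub>n\<close> is
  approximated by \<open>a\<^sub>n e\<^sub>n\<close>, which tends to \<open>s 0 = 0\<close>; so \<open>a\<^sub>n \<rightarrow> 0\<close>, and symmetrically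
  \<open>b\<^sub>n = (w\<^sub>n, [j]) \<rightarrow> 0\<close>. But \<open>a\<^sub>n b\<^sub>n = ([j], [j])\<close> is a constant nonzero element, whereas
  continuity of multiplication forces \<open>a\<^sub>n b\<^sub>n \<rightarrow> 0 0 = 0\<close>.
\<close>

lemma pc_mult_None_left [simp]: "pc_mult None x = None"
  by (simp add: pc_mult_def)

lemma pc_mult_None_right [simp]: "pc_mult x None = None"
  by (simp add: pc_mult_def split: option.split)

lemma pc_mult_Some_cancel [simp]: "pc_mult (Some (u, w)) (Some (w, v)) = Some (u, v)"
  by (simp add: pc_mult_def)

lemma pc_mult_Some_incomparable:
  assumes "\<nexists>r. x = v @ r" and "\<nexists>r. v = x @ r"
  shows "pc_mult (Some (u, v)) (Some (x, y)) = None"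
  using assms by (simp add: pc_mult_def)

lemma replicate_append_Cons_eq_imp_eq:
  assumes "a \<noteq> b" and "replicate n a @ b # r = replicate k a @ b # s"
  shows "n = k"
  using assms(2)
proof (induction n arbitrary: k)
  case 0
  then show ?case using assms(1) by (cases k) auto
next
  case (Suc n)
  then show ?case using assms(1) by (cases k) auto
qed

lemma pc_mult_eq_one_finite:
  "finite {x. pc_mult (pc_mult (Some ([], u)) x) (Some (v, [])) = pc_one}"
proof (rule finite_subset)
  show "{x. pc_mult (pc_mult (Some ([], u)) x) (Some (v, [])) = pc_one}
        \<subseteq> Some ` (set (prefixes u) \<times> set (prefixes v))"
  proof
    fix x assume "x \<in> {x. pc_mult (pc_mult (Some ([], u)) x) (Some (v, [])) = pc_one}"
    then obtain p q r where "x = Some (p, q)" "u = p @ r" "v = q @ r"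
      by (cases x) (auto simp: pc_mult_def pc_one_def split: if_splits)
    then show "x \<in> Some ` (set (prefixes u) \<times> set (prefixes v))"
      by auto
  qed
qed simp

lemma pc_one_annihilated:
  assumes "a \<noteq> b" and "x \<noteq> pc_one"
  shows "\<exists>e \<in> {Some ([a], [a]), Some ([b], [b])}. pc_mult e x = None \<or> pc_mult x e = None"
proof (cases x)
  case (Some p)
  then obtain u v where x: "x = Some (u, v)" and "u \<noteq> [] \<or> v \<noteq> []"
    using assms(2) by (cases p) (auto simp: pc_one_def)
  then consider c u' where "u = c # u'" | c v' where "v = c # v'"
    by (auto simp: neq_Nil_conv)
  then show ?thesis
    by cases (use assms(1) x in \<open>cases "c = a"; auto simp: pc_mult_def\<close>)+
qed auto

lemma not_discrete_family_singletons_imp_derived_set_of_nonempty: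
  assumes "\<not> discrete_family X ((\<lambda>x. {x}) ` S)"
  shows "X derived_set_of S \<noteq> {}"
proof -
  obtain s where s: "s \<in> topspace X" and not_separated: "\<And>V. openin X V \<Longrightarrow> s \<in> V \<Longrightarrow>
      \<exists>U1 \<in> (\<lambda>x. {x}) ` S. \<exists>U2 \<in> (\<lambda>x. {x}) ` S. U1 \<inter> V \<noteq> {} \<and> U2 \<inter> V \<noteq> {} \<and> U1 \<noteq> U2"
    using assms unfolding discrete_family_def by meson
  have "s \<in> X derived_set_of S"
    unfolding in_derived_set_of
  proof (intro conjI s allI impI)
    fix V assume "s \<in> V \<and> openin X V"
    then obtain x y where "x \<in> S" "y \<in> S" "x \<in> V" "y \<in> V" "x \<noteq> y"
      using not_separated by blast
    then show "\<exists>y. y \<noteq> s \<and> y \<in> S \<and> y \<in> V"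
      by metis
  qed
  then show ?thesis
    by blast
qed

lemma d_feebly_compact_derived_set_of_isolated_nonempty:
  assumes "d_feebly_compact X" and "infinite S" and "\<And>x. x \<in> S \<Longrightarrow> openin X {x}"
  shows "X derived_set_of S \<noteq> {}"
proof (rule not_discrete_family_singletons_imp_derived_set_of_nonempty, rule notI)
  assume "discrete_family X ((\<lambda>x. {x}) ` S)"
  moreover have "\<forall>U \<in> (\<lambda>x. {x}) ` S. openin X U"
    using assms(3) by blast
  ultimately have "finite ((\<lambda>x. {x}) ` S)"
    using assms(1) unfolding d_feebly_compact_def by blast
  moreover have "inj_on (\<lambda>x. {x}) S"
    by (rule inj_onI) blast
  ultimately show False
    using assms(2) finite_imageD by blast
qed

lemma t1_space_derived_set_of_Diff_finite:
  assumes "t1_space X" and "finite F"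
  shows "X derived_set_of (S - F) = X derived_set_of S"
proof -
  have "X derived_set_of S \<subseteq> X derived_set_of ((S - F) \<union> F)"
    by (rule derived_set_of_mono) blast
  also have "\<dots> = X derived_set_of (S - F)"
    using assms by (simp only: derived_set_of_Un) (simp add: t1_space_derived_set_of_finite)
  finally show ?thesis
    using derived_set_of_mono[of "S - F" S X] by blast
qed

lemma d_feebly_compact_limitin_if_derived_set_of_subset:
  assumes "t1_space X" and "d_feebly_compact X" and "inj a"
    and "\<And>n. openin X {a n}" and "z \<in> topspace X"
    and "X derived_set_of (range a) \<subseteq> {z}"
  shows "limitin X a z sequentially"
  unfolding limitin_def
proof (intro conjI assms(5) allI impI)
  fix V assume V: "openin X V \<and> z \<in> V"
  let ?N = "{n. a n \<notin> V}"
  show "eventually (\<lambda>n. a n \<in> V) sequentially"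
  proof (rule ccontr)
    assume "\<not> eventually (\<lambda>n. a n \<in> V) sequentially"
    then have "infinite ?N"
      by (simp add: eventually_cofinite flip: cofinite_eq_sequentially)
    then have "infinite (a ` ?N)"
      using assms(3) by (simp add: finite_image_iff inj_on_subset)
    then have "X derived_set_of (a ` ?N) \<noteq> {}"
      using d_feebly_compact_derived_set_of_isolated_nonempty[OF assms(2)] assms(4) by blast
    then obtain s where s: "s \<in> X derived_set_of (a ` ?N)"
      by blast
    have "X derived_set_of (a ` ?N) \<subseteq> X derived_set_of (range a)"
      by (rule derived_set_of_mono) blast
    then have "s = z"
      using s assms(6) by blast
    moreover have "a ` ?N \<subseteq> topspace X - V"
      using openin_subset[OF assms(4)] by blast
    then have "X closure_of (a ` ?N) \<subseteq> topspace X - V"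
      using V by (intro closure_of_minimal) auto
    then have "s \<notin> V"
      using subsetD[OF derived_set_of_subset_closure_of s] by blast
    ultimately show False
      using V by blast
  qed
qed

lemma openin_singleton_if_notin_closure_of_dense:
  assumes "t1_space X" and "X closure_of D = topspace X"
    and "x \<in> topspace X" and "x \<notin> X closure_of (D - {x})"
  shows "openin X {x}"
proof -
  define U where "U = topspace X - X closure_of (D - {x})"
  have U_open: "openin X U"
    by (simp add: U_def openin_diff)
  have "U \<inter> D \<subseteq> {x}"
    using closure_of_subset_Int[of X "D - {x}"] by (auto simp: U_def)
  have "U = U \<inter> X closure_of D"
    using assms(2) by (auto simp: U_def)
  also have "\<dots> \<subseteq> X closure_of (U \<inter> D)"
    by (rule openin_Int_closure_of_subset[OF U_open])
  also have "\<dots> \<subseteq> X closure_of {x}"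
    by (rule closure_of_mono) fact
  also have "\<dots> = {x}"
    using assms(1,3) by (simp add: closure_of_closedin closedin_t1_singleton)
  finally have "U = {x}"
    using assms(3,4) by (auto simp: U_def)
  then show ?thesis
    using U_open by simp
qed

lemma continuous_map_semigroup_mult:
  assumes "topological_semigroup X m" and "continuous_map Y X f" and "continuous_map Y X g"
  shows "continuous_map Y X (\<lambda>y. m (f y) (g y))"
proof -
  have "continuous_map (prod_topology X X) X (\<lambda>p. m (fst p) (snd p))"
    using assms(1) by (simp add: topological_semigroup_def)
  from continuous_map_compose[OF continuous_map_pairedI[OF assms(2,3)] this] show ?thesis
    by (simp add: o_def)
qed

lemma topological_semigroup_opposite:
  assumes "topological_semigroup X m"
  shows "topological_semigroup X (\<lambda>x y. m y x)"
  unfolding topological_semigroup_def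
proof (intro conjI ballI)
  show "continuous_map (prod_topology X X) X (\<lambda>p. m (snd p) (fst p))"
    by (rule continuous_map_semigroup_mult[OF assms continuous_map_snd continuous_map_fst])
qed (use assms in \<open>auto simp: topological_semigroup_def\<close>)

lemma limitin_semigroup_mult:
  assumes "topological_semigroup X m" and "limitin X f a F" and "limitin X g b F"
  shows "limitin X (\<lambda>x. m (f x) (g x)) (m a b) F"
proof -
  have "limitin (prod_topology X X) (\<lambda>x. (f x, g x)) (a, b) F"
    using assms(2,3) by (simp add: limitin_pairwise o_def)
  from continuous_map_limit[OF continuous_map_semigroup_mult[OF assms(1)
      continuous_map_fst continuous_map_snd] this] show ?thesis
    by (simp add: o_def)
qed

lemma semigroup_mult_open_nbhds:
  assumes "topological_semigroup X m" and "openin X Q"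
    and "x \<in> topspace X" and "y \<in> topspace X" and "m x y \<in> Q"
  obtains U V where "openin X U" "openin X V" "x \<in> U" "y \<in> V"
    and "\<And>u v. u \<in> U \<Longrightarrow> v \<in> V \<Longrightarrow> m u v \<in> Q"
proof -
  let ?P = "{p \<in> topspace (prod_topology X X). m (fst p) (snd p) \<in> Q}"
  have open_P: "openin (prod_topology X X) ?P"
    by (rule openin_continuous_map_preimage[OF continuous_map_semigroup_mult[OF assms(1)
      continuous_map_fst continuous_map_snd] assms(2)])
  have "(x, y) \<in> ?P"
    using assms(3-5) by simp
  from open_P[unfolded openin_prod_topology_alt, rule_format, OF this]
  obtain U V where UV: "openin X U" "openin X V" "x \<in> U" "y \<in> V" "U \<times> V \<subseteq> ?P"
    by (elim exE conjE)
  show ?thesis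
  proof (rule that[OF UV(1-4)])
    fix u v assume "u \<in> U" "v \<in> V"
    then have "(u, v) \<in> ?P"
      using UV(5) by blast
    then show "m u v \<in> Q"
      by simp
  qed
qed

lemma closedin_semigroup_mult_eq:
  assumes "Hausdorff_space X" and "topological_semigroup X m"
    and "continuous_map X X f" and "continuous_map X X g" and "continuous_map X X k"
  shows "closedin X {t \<in> topspace X. m (f t) (g t) = k t}"
  using closedin_continuous_maps_eq[OF assms(1) continuous_map_semigroup_mult[OF assms(2-4)] assms(5)] .

lemma derived_set_of_orthogonal_idempotents_subset:
  assumes "Hausdorff_space X" and "topological_semigroup X m" and "z \<in> topspace X"
    and "\<And>n. e n \<in> topspace X" and "\<And>n. m (e n) (e n) = e n"
    and "\<And>n k. n \<noteq> k \<Longrightarrow> m (e n) (e k) = z"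
  shows "X derived_set_of (range e) \<subseteq> {z}"
proof
  fix s assume s: "s \<in> X derived_set_of (range e)"
  then have s_top: "s \<in> topspace X"
    by (rule subsetD[OF derived_set_of_subset_topspace])
  have s_closure: "s \<in> X closure_of (range e - F)" if "finite F" for F
  proof -
    have "s \<in> X derived_set_of (range e - F)"
      using s t1_space_derived_set_of_Diff_finite[OF Hausdorff_imp_t1_space[OF assms(1)] that]
      by simp
    then show ?thesis
      by (rule subsetD[OF derived_set_of_subset_closure_of])
  qed
  note closed = closedin_semigroup_mult_eq[OF assms(1,2)]
  have s_annihilates: "m s (e k) = z" for k
  proof (rule forall_in_closure_of[OF s_closure[of "{e k}"]])
    show "m t (e k) = z" if "t \<in> range e - {e k}" for t
      using that by (auto intro: assms(6))
  qed (use assms in \<open>auto intro!: closed\<close>)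
  have "m s s = z"
    by (rule forall_in_closure_of[OF s_closure[of "{}"]])
      (use assms s_top s_annihilates in \<open>auto intro!: closed\<close>)
  moreover have "m s s = s"
    by (rule forall_in_closure_of[OF s_closure[of "{}"]])
      (use assms in \<open>auto intro!: closed\<close>)
  ultimately show "s \<in> {z}"
    by simp
qed

lemma derived_set_of_right_absorbed_subset:
  assumes "Hausdorff_space X" and "topological_semigroup X m"
    and "\<And>t. t \<in> topspace X \<Longrightarrow> m t z = z" and "limitin X x z sequentially"
    and "\<And>n. m (a n) (x n) = a n"
  shows "X derived_set_of (range a) \<subseteq> {z}"
proof
  fix s assume s: "s \<in> X derived_set_of (range a)"
  then have s_top: "s \<in> topspace X"
    by (rule subsetD[OF derived_set_of_subset_topspace])
  have z_top: "z \<in> topspace X"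
    using assms(4) by (rule limitin_topspace)
  show "s \<in> {z}"
  proof (rule ccontr)
    assume "s \<notin> {z}"
    then obtain W Q where W: "openin X W" "s \<in> W" and Q: "openin X Q" "z \<in> Q"
        and "disjnt W Q"
      using assms(1)[unfolded Hausdorff_space_def, rule_format, of s z] s_top z_top by blast
    have "m s z \<in> Q"
      using assms(3)[OF s_top] Q(2) by simp
    from semigroup_mult_open_nbhds[OF assms(2) Q(1) s_top z_top this]
    obtain U V where U: "openin X U" and V: "openin X V" and "s \<in> U" "z \<in> V"
        and UV: "\<And>u v. u \<in> U \<Longrightarrow> v \<in> V \<Longrightarrow> m u v \<in> Q"
      by blast
    define E where "E = {n. x n \<notin> V}"
    have "eventually (\<lambda>n. x n \<in> V) sequentially"
      using assms(4) V \<open>z \<in> V\<close> by (simp add: limitin_def)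
    then have "finite E"
      by (simp add: E_def eventually_cofinite flip: cofinite_eq_sequentially)
    then have "s \<in> X derived_set_of (range a - a ` E)"
      using s t1_space_derived_set_of_Diff_finite[OF Hausdorff_imp_t1_space[OF assms(1)]]
      by simp
    then have "s \<in> X closure_of (range a - a ` E)"
      by (rule subsetD[OF derived_set_of_subset_closure_of])
    moreover have "openin X (W \<inter> U)" "s \<in> W \<inter> U"
      using W U \<open>s \<in> U\<close> by auto
    ultimately obtain y where "y \<in> range a - a ` E" "y \<in> W \<inter> U"
      unfolding in_closure_of by blast
    then obtain n where "n \<notin> E" "a n \<in> W" "a n \<in> U"
      by blast
    then have "m (a n) (x n) \<in> Q"
      using UV by (simp add: E_def)
    then show False
      using assms(5) \<open>a n \<in> W\<close> \<open>disjnt W Q\<close> by (simp add: disjnt_iff)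
  qed
qed

locale dense_polycyclic_embedding =
  fixes X :: "'s topology" and m :: "'s \<Rightarrow> 's \<Rightarrow> 's" and h :: "'i polycyclic \<Rightarrow> 's"
    and i j :: 'i
  assumes two_letters: "i \<noteq> j"
    and Hausdorff: "Hausdorff_space X"
    and semigroup: "topological_semigroup X m"
    and h_topspace: "h ` UNIV \<subseteq> topspace X"
    and inj_h: "inj h"
    and h_mult: "\<And>a b. h (pc_mult a b) = m (h a) (h b)"
    and dense: "X closure_of (h ` UNIV) = topspace X"
begin

lemma h_in_topspace [simp]: "h x \<in> topspace X"
  using h_topspace by blast

lemmas closedin_mult_eq = closedin_semigroup_mult_eq[OF Hausdorff semigroup]

lemma mult_zero_right: "t \<in> topspace X \<Longrightarrow> m t (h None) = h None"
  by (rule forall_in_closure_of[of t X "h ` UNIV"])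
    (auto simp: dense intro!: closedin_mult_eq simp flip: h_mult)

lemma mult_zero_left: "t \<in> topspace X \<Longrightarrow> m (h None) t = h None"
  by (rule forall_in_closure_of[of t X "h ` UNIV"])
    (auto simp: dense intro!: closedin_mult_eq simp flip: h_mult)

lemma h_one_notin_closure_of: "h pc_one \<notin> X closure_of (h ` (UNIV - {pc_one}))"
proof
  define E where "E = {Some ([i], [i]), Some ([j], [j])}"
  let ?C = "\<Union>e \<in> E. {t \<in> topspace X. m (h e) t = h None} \<union> {t \<in> topspace X. m t (h e) = h None}"
  assume "h pc_one \<in> X closure_of (h ` (UNIV - {pc_one}))"
  then have "h pc_one \<in> ?C"
  proof (rule forall_in_closure_of)
    have "closedin X ?C"
      unfolding E_def by (simp only: UN_insert UN_empty) (intro closedin_Un closedin_mult_eq; simp)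
    moreover have "{t \<in> topspace X. t \<in> ?C} = ?C"
      by blast
    ultimately show "closedin X {t \<in> topspace X. t \<in> ?C}"
      by simp
  next
    fix t assume "t \<in> h ` (UNIV - {pc_one})"
    then obtain x where x: "t = h x" "x \<noteq> pc_one"
      by blast
    then obtain e where "e \<in> E" "pc_mult e x = None \<or> pc_mult x e = None"
      using pc_one_annihilated[OF two_letters] unfolding E_def by blast
    then show "t \<in> ?C"
      using x by (force simp flip: h_mult)
  qed
  then show False
    using inj_h by (auto simp: E_def pc_one_def pc_mult_def simp flip: h_mult dest: injD)
qed

lemma h_notin_closure_of:
  assumes "b \<noteq> None"
  shows "h b \<notin> X closure_of (h ` (UNIV - {b}))"
proof
  assume b_closure: "h b \<in> X closure_of (h ` (UNIV - {b}))"
  obtain u v where b: "b = Some (u, v)"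
    using assms by auto
  \<comment> \<open>\<open>K\<close> maps \<open>h b\<close> to \<open>h 1\<close>, but only finitely many points of \<open>h ` UNIV\<close> to \<open>h 1\<close>,
    so it carries the isolation of \<open>h 1\<close> back to \<open>h b\<close>\<close>
  define K where "K t = m (m (h (Some ([], u))) t) (h (Some (v, [])))" for t
  define F where "F = {x. pc_mult (pc_mult (Some ([], u)) x) (Some (v, [])) = pc_one}"
  have K_h: "K (h x) = h (pc_mult (pc_mult (Some ([], u)) x) (Some (v, [])))" for x
    by (simp add: K_def h_mult)
  have "continuous_map X X K"
    unfolding K_def by (intro continuous_map_semigroup_mult[OF semigroup] continuous_map_const
      continuous_map_id[unfolded id_def]; simp)
  have F_closed: "X closure_of (h ` (F - {b})) = h ` (F - {b})"
    using pc_mult_eq_one_finite[of u v]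
    by (intro closure_of_closedin closedin_Hausdorff_finite[OF Hausdorff]) (auto simp: F_def)
  have "h ` (UNIV - {b}) \<subseteq> h ` (UNIV - F) \<union> h ` (F - {b})"
    by blast
  from subsetD[OF closure_of_mono[OF this] b_closure]
  have "h b \<in> X closure_of (h ` (UNIV - F)) \<union> h ` (F - {b})"
    by (simp only: closure_of_Un F_closed)
  moreover have "h b \<notin> h ` (F - {b})"
    using inj_h by (auto dest: injD)
  ultimately have "h b \<in> X closure_of (h ` (UNIV - F))"
    by blast
  then have "K (h b) \<in> K ` (X closure_of (h ` (UNIV - F)))"
    by (rule imageI)
  also have "\<dots> \<subseteq> X closure_of (K ` h ` (UNIV - F))"
    by (rule continuous_map_image_closure_subset) fact
  also have "\<dots> \<subseteq> X closure_of (h ` (UNIV - {pc_one}))"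
    by (rule closure_of_mono) (auto simp: K_h F_def)
  finally show False
    using h_one_notin_closure_of K_h[of b] by (simp add: b pc_one_def)
qed

lemma openin_h_singleton: "b \<noteq> None \<Longrightarrow> openin X {h b}"
  using h_notin_closure_of[of b] inj_h
  by (intro openin_singleton_if_notin_closure_of_dense[OF Hausdorff_imp_t1_space[OF Hausdorff] dense])
    (auto simp: image_set_diff)

definition code_word :: "nat \<Rightarrow> 'i list" where
  "code_word n = replicate n i @ [j]"

lemma code_word_append_eq_imp_eq: "code_word n @ r = code_word k @ s \<Longrightarrow> n = k"
  unfolding code_word_def by (rule replicate_append_Cons_eq_imp_eq[OF two_letters]) simp

lemma inj_code_word: "inj code_word"
  by (rule injI, rule code_word_append_eq_imp_eq[of _ "[]" _ "[]"]) simp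

lemma pc_mult_code_word_orthogonal:
  assumes "n \<noteq> k"
  shows "pc_mult (Some (code_word n, code_word n)) (Some (code_word k, code_word k)) = None"
proof (rule pc_mult_Some_incomparable)
  have "code_word n' \<noteq> code_word k' @ r" if "n' \<noteq> k'" for n' k' r
    using code_word_append_eq_imp_eq[of k' r n' "[]"] that by auto
  then show "\<nexists>r. code_word k = code_word n @ r" "\<nexists>r. code_word n = code_word k @ r"
    using assms by auto
qed

lemma limitin_zero_if_derived_set_of_subset:
  assumes "d_feebly_compact X" and "inj s" and "\<And>n. s n \<noteq> None"
    and "X derived_set_of range (\<lambda>n. h (s n)) \<subseteq> {h None}"
  shows "limitin X (\<lambda>n. h (s n)) (h None) sequentially"
proof (rule d_feebly_compact_limitin_if_derived_set_of_subset[OF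
    Hausdorff_imp_t1_space[OF Hausdorff] assms(1) _ _ h_in_topspace assms(4)])
  show "inj (\<lambda>n. h (s n))"
    using inj_compose[OF inj_h assms(2)] by (simp add: o_def)
  show "openin X {h (s n)}" for n
    by (rule openin_h_singleton[OF assms(3)])
qed

lemma limitin_idempotents:
  assumes "d_feebly_compact X"
  shows "limitin X (\<lambda>n. h (Some (code_word n, code_word n))) (h None) sequentially"
proof (rule limitin_zero_if_derived_set_of_subset[OF assms])
  show "inj (\<lambda>n. Some (code_word n, code_word n))"
    using inj_code_word by (simp add: inj_def)
  show "X derived_set_of range (\<lambda>n. h (Some (code_word n, code_word n))) \<subseteq> {h None}"
    using pc_mult_code_word_orthogonal
    by (intro derived_set_of_orthogonal_idempotents_subset[OF Hausdorff semigroup])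
      (simp_all flip: h_mult)
qed simp

lemma limitin_left_factors:
  assumes "d_feebly_compact X"
  shows "limitin X (\<lambda>n. h (Some ([j], code_word n))) (h None) sequentially"
proof (rule limitin_zero_if_derived_set_of_subset[OF assms])
  show "inj (\<lambda>n. Some ([j], code_word n))"
    using inj_code_word by (simp add: inj_def)
  show "X derived_set_of range (\<lambda>n. h (Some ([j], code_word n))) \<subseteq> {h None}"
    by (rule derived_set_of_right_absorbed_subset[OF Hausdorff semigroup mult_zero_right
      limitin_idempotents[OF assms]]) (simp_all flip: h_mult)
qed simp

lemma limitin_right_factors:
  assumes "d_feebly_compact X"
  shows "limitin X (\<lambda>n. h (Some (code_word n, [j]))) (h None) sequentially"
proof (rule limitin_zero_if_derived_set_of_subset[OF assms])
  show "inj (\<lambda>n. Some (code_word n, [j]))"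
    using inj_code_word by (simp add: inj_def)
  show "X derived_set_of range (\<lambda>n. h (Some (code_word n, [j]))) \<subseteq> {h None}"
    by (rule derived_set_of_right_absorbed_subset[OF Hausdorff
      topological_semigroup_opposite[OF semigroup] mult_zero_left limitin_idempotents[OF assms]])
      (simp_all flip: h_mult)
qed simp

end

theorem corollary13:
  fixes X :: "'s topology" and m :: "'s \<Rightarrow> 's \<Rightarrow> 's" and h :: "'i polycyclic \<Rightarrow> 's"
  assumes "\<exists>a b :: 'i. a \<noteq> b"
  shows "\<not> (Hausdorff_space X \<and> d_feebly_compact X \<and> topological_semigroup X m \<and>
            h ` UNIV \<subseteq> topspace X \<and> inj h \<and>
            (\<forall>a b. h (pc_mult a b) = m (h a) (h b)) \<and>
            X closure_of (h ` UNIV) = topspace X)"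
proof
  assume H: "Hausdorff_space X \<and> d_feebly_compact X \<and> topological_semigroup X m \<and>
            h ` UNIV \<subseteq> topspace X \<and> inj h \<and>
            (\<forall>a b. h (pc_mult a b) = m (h a) (h b)) \<and>
            X closure_of (h ` UNIV) = topspace X"
  obtain i j :: 'i where "i \<noteq> j"
    using assms by blast
  with H interpret dense_polycyclic_embedding X m h i j
    by unfold_locales auto
  have feebly: "d_feebly_compact X"
    using H by blast
  let ?e = "h (Some ([j], [j]))"
  have "limitin X (\<lambda>n. m (h (Some ([j], code_word n))) (h (Some (code_word n, [j]))))
      (m (h None) (h None)) sequentially"
    by (rule limitin_semigroup_mult[OF semigroup limitin_left_factors[OF feebly]
      limitin_right_factors[OF feebly]])
  then have "limitin X (\<lambda>n. ?e) (h None) sequentially"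
    by (simp add: mult_zero_right flip: h_mult)
  moreover have "limitin X (\<lambda>n. ?e) ?e sequentially"
    by simp
  ultimately have "h None = ?e"
    by (rule limitin_Hausdorff_unique[OF _ _ trivial_limit_sequentially Hausdorff])
  then show False
    using inj_h by (auto dest: injD)
qed

end
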